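(* Fix a point $(\xi^1,\xi^2)$ with a symmetric positive definite matrix $g_{\alpha\beta}$ ($\alpha,\beta\in\{1,2\}$), $g=\det(g_{\alpha\beta})$, inverse $g^{\alpha\beta}$. Let $P=P(\rho,e)$ be a smooth pressure law and consider the state vector $U=(\rho,v^1,v^2,V^3,e)^T$ with $\rho>0$, $E=e+\tfrac12\left(g_{\alpha\beta}v^\alpha v^\beta+(V^3)^2\right)$ and $q_c^2=g_{\alpha\beta}v^\alpha v^\beta$. For $\alpha=1,2$ let $A^\alpha$ be the $5\times5$ Jacobian matrix with respect to $U$ (with $g_{\alpha\beta}$ held fixed) of the flux $$F^\alpha(U)=\Big(\rho\sqrt g\,v^\alpha,\ \sqrt g[\rho v^1v^\alpha+g^{1\alpha}P],\ \sqrt g[\rho v^2v^\alpha+g^{2\alpha}P],\ \rho\sqrt g\,V^3v^\alpha,\ \sqrt g[\rho E+P]v^\alpha\Big)^T.$$ Assume $PP_e+\rho^2P_\rho>0$ and let $c=\frac{\sqrt{PP_e+\rho^2P_\rho}}{\rho}$. At a state where $A^1$ is invertible, the eigenvalues of $\bar A=(A^1)^{-1}A^2$ are $$\frac{v^2}{v^1},\ \frac{v^2}{v^1},\ \frac{v^2}{v^1},\ \frac{v^1v^2-c^2g^{12}\mp\frac{c}{\sqrt g}\sqrt{q_c^2-c^2}}{(v^1)^2-g^{11}c^2}.$$ Consequently the system $A^1U_{\xi^1}+A^2U_{\xi^2}+S=0$ (treating $\xi^1$ as time-like) is never strictly hyperbolic; it is (non-strictly) hyperbolic where $q_c>c$ and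 elliptic where $q_c<c$.
   Context: For a first-order system $U_t+\sum_i\bar A^iU_{x^i}+\bar S=0$, it is called strictly hyperbolic if for every unit vector $w$ the eigenvalues of $\sum_i w_i\bar A^i$ are real and distinct, non-strictly hyperbolic if they are all real but not all distinct, and elliptic if some eigenvalue is complex (non-real). For the steady system $A^1U_{\xi^1}+A^2U_{\xi^2}+S=0$, $\xi^1$ is treated as the time-like variable, so the relevant matrix is $\bar A=(A^1)^{-1}A^2$. $P_\rho,P_e$ denote partial derivatives of the pressure law. These are the steady conical Euler equations projected on the unit sphere, with $v^\alpha$ rescaled crossflow velocity components and $V^3$ the radial velocity. *)

theory Defs
  imports "HOL-Analysis.Analysis"
begin

definition cmat :: "real^'n^'m \<Rightarrow> complex^'n^'m" where
  "cmat M = (\<chi> i j. complex_of_real (M $ i $ j))"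

definition charpoly :: "real^'n^'n \<Rightarrow> complex \<Rightarrow> complex" where
  "charpoly M z = det (mat z - cmat M)"

definition eigenvalues :: "real^'n^'n \<Rightarrow> complex set" where
  "eigenvalues M = {z. charpoly M z = 0}"

text \<open>Eigenvalues counted with algebraic multiplicity are all distinct iff there are
  exactly n of them as a set.\<close>
definition all_real_eigenvalues :: "real^'n^'n \<Rightarrow> bool" where
  "all_real_eigenvalues M \<longleftrightarrow> (\<forall>z\<in>eigenvalues M. Im z = 0)"

definition distinct_eigenvalues :: "real^'n^'n \<Rightarrow> bool" where
  "distinct_eigenvalues M \<longleftrightarrow> card (eigenvalues M) = CARD('n)"

text \<open>Classification of a first order system U_t + Abar U_x + S = 0 with ONE space
  variable: the unit vectors w are w = 1 and w = -1, and the relevant matrix is w * Abar.\<close>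
definition strictly_hyperbolic :: "real^'n^'n \<Rightarrow> bool" where
  "strictly_hyperbolic Abar \<longleftrightarrow>
     (\<forall>w::real. \<bar>w\<bar> = 1 \<longrightarrow> all_real_eigenvalues (w *\<^sub>R Abar) \<and> distinct_eigenvalues (w *\<^sub>R Abar))"

definition nonstrictly_hyperbolic :: "real^'n^'n \<Rightarrow> bool" where
  "nonstrictly_hyperbolic Abar \<longleftrightarrow>
     (\<forall>w::real. \<bar>w\<bar> = 1 \<longrightarrow> all_real_eigenvalues (w *\<^sub>R Abar)) \<and>
     \<not> (\<forall>w::real. \<bar>w\<bar> = 1 \<longrightarrow> distinct_eigenvalues (w *\<^sub>R Abar))"

definition elliptic :: "real^'n^'n \<Rightarrow> bool" where
  "elliptic Abar \<longleftrightarrow> (\<exists>w::real. \<bar>w\<bar> = 1 \<and> \<not> all_real_eigenvalues (w *\<^sub>R Abar))"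

text \<open>State U = (rho, v1, v2, V3, e); indices of real^5 are 1..5, of real^2 are 1,2.
  G = (g_{alpha beta}) is the metric, its inverse (g^{alpha beta}) is matrix_inv G,
  P is the pressure law P(rho, e).\<close>

definition crossvel :: "real^5 \<Rightarrow> real^2" where
  "crossvel U = vector [U$2, U$3]"

definition total_energy :: "real^2^2 \<Rightarrow> real^5 \<Rightarrow> real" where
  "total_energy G U = U$5 + 1/2 * (crossvel U \<bullet> (G *v crossvel U) + (U$4)^2)"

definition flux :: "real^2^2 \<Rightarrow> (real \<Rightarrow> real \<Rightarrow> real) \<Rightarrow> 2 \<Rightarrow> real^5 \<Rightarrow> real^5" where
  "flux G P a U =
    (let rho = U$1; v = crossvel U; V3 = U$4; e = U$5;
         sg = sqrt (det G); gi = matrix_inv G; p = P rho e; E = total_energy G U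
     in vector [rho * sg * v$a,
                sg * (rho * v$1 * v$a + gi$1$a * p),
                sg * (rho * v$2 * v$a + gi$2$a * p),
                rho * sg * V3 * v$a,
                sg * (rho * E + p) * v$a])"

definition fluxjac :: "real^2^2 \<Rightarrow> (real \<Rightarrow> real \<Rightarrow> real) \<Rightarrow> 2 \<Rightarrow> real^5 \<Rightarrow> real^5^5" where
  "fluxjac G P a U = jacobian (flux G P a) (at U)"

end

theory Submission
  imports Defs
begin

text \<open>
  Both Jacobians are instances of the Jacobian of the flux n_1 F^1 + n_2 F^2 in a direction n,
  which is linear in n, so z A^1 - A^2 is that Jacobian for n = (z, -1). Factoring out a unit
  lower triangular matrix (the row operations that remove the convective terms) leaves a sparse
  matrix of determinant sqrt g^5 rho^2 (v.n)^3 (rho^2 (v.n)^2 - rho^2 c^2 n^T g^-1 n).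
  Hence the characteristic polynomial det (z A^1 - A^2) / det A^1 of (A^1)^-1 A^2 has the triple
  root v^2/v^1, and its remaining quadratic factor has discriminant c^2 (q_c^2 - c^2) / g,
  because the adjugate of g^-1 is g_ab / g. So at most three of the five eigenvalues are
  distinct, and all of them are real iff q_c >= c. The eigenvalues of -Abar are those of Abar
  negated, so the direction w = -1 in the definitions behaves like w = 1.
\<close>

section \<open>Vectors and matrices of size 5\<close>

lemma exhaust_5:
  fixes x :: 5
  shows "x = 1 \<or> x = 2 \<or> x = 3 \<or> x = 4 \<or> x = 5"
proof (induct x)
  case (of_int z)
  then have "z = 0 \<or> z = 1 \<or> z = 2 \<or> z = 3 \<or> z = 4" by fastforce
  then show ?case by auto
qed

lemma forall_5: "(\<forall>i::5. P i) \<longleftrightarrow> P 1 \<and> P 2 \<and> P 3 \<and> P 4 \<and> P 5"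
  by (metis exhaust_5)

lemma UNIV_5: "UNIV = {1, 2, 3, 4, 5::5}"
  using exhaust_5 by auto

lemma sum_5: "sum f (UNIV::5 set) = f 1 + f 2 + f 3 + f 4 + f 5"
  unfolding UNIV_5 by (simp add: ac_simps)

lemma vector_5 [simp]:
  "(vector [x1,x2,x3,x4,x5] ::('a::zero)^5)$1 = x1"
  "(vector [x1,x2,x3,x4,x5] ::('a::zero)^5)$2 = x2"
  "(vector [x1,x2,x3,x4,x5] ::('a::zero)^5)$3 = x3"
  "(vector [x1,x2,x3,x4,x5] ::('a::zero)^5)$4 = x4"
  "(vector [x1,x2,x3,x4,x5] ::('a::zero)^5)$5 = x5"
  unfolding vector_def by simp_all

lemma det_5:
  "det (A::'a::comm_ring_1^5^5) =
    A$1$1 * A$2$2 * A$3$3 * A$4$4 * A$5$5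
    - A$1$1 * A$2$2 * A$3$3 * A$4$5 * A$5$4
    - A$1$1 * A$2$2 * A$3$4 * A$4$3 * A$5$5
    + A$1$1 * A$2$2 * A$3$4 * A$4$5 * A$5$3
    + A$1$1 * A$2$2 * A$3$5 * A$4$3 * A$5$4
    - A$1$1 * A$2$2 * A$3$5 * A$4$4 * A$5$3
    - A$1$1 * A$2$3 * A$3$2 * A$4$4 * A$5$5
    + A$1$1 * A$2$3 * A$3$2 * A$4$5 * A$5$4
    + A$1$1 * A$2$3 * A$3$4 * A$4$2 * A$5$5
    - A$1$1 * A$2$3 * A$3$4 * A$4$5 * A$5$2
    - A$1$1 * A$2$3 * A$3$5 * A$4$2 * A$5$4
    + A$1$1 * A$2$3 * A$3$5 * A$4$4 * A$5$2
    + A$1$1 * A$2$4 * A$3$2 * A$4$3 * A$5$5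
    - A$1$1 * A$2$4 * A$3$2 * A$4$5 * A$5$3
    - A$1$1 * A$2$4 * A$3$3 * A$4$2 * A$5$5
    + A$1$1 * A$2$4 * A$3$3 * A$4$5 * A$5$2
    + A$1$1 * A$2$4 * A$3$5 * A$4$2 * A$5$3
    - A$1$1 * A$2$4 * A$3$5 * A$4$3 * A$5$2
    - A$1$1 * A$2$5 * A$3$2 * A$4$3 * A$5$4
    + A$1$1 * A$2$5 * A$3$2 * A$4$4 * A$5$3
    + A$1$1 * A$2$5 * A$3$3 * A$4$2 * A$5$4
    - A$1$1 * A$2$5 * A$3$3 * A$4$4 * A$5$2
    - A$1$1 * A$2$5 * A$3$4 * A$4$2 * A$5$3
    + A$1$1 * A$2$5 * A$3$4 * A$4$3 * A$5$2
    - A$1$2 * A$2$1 * A$3$3 * A$4$4 * A$5$5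
    + A$1$2 * A$2$1 * A$3$3 * A$4$5 * A$5$4
    + A$1$2 * A$2$1 * A$3$4 * A$4$3 * A$5$5
    - A$1$2 * A$2$1 * A$3$4 * A$4$5 * A$5$3
    - A$1$2 * A$2$1 * A$3$5 * A$4$3 * A$5$4
    + A$1$2 * A$2$1 * A$3$5 * A$4$4 * A$5$3
    + A$1$2 * A$2$3 * A$3$1 * A$4$4 * A$5$5
    - A$1$2 * A$2$3 * A$3$1 * A$4$5 * A$5$4
    - A$1$2 * A$2$3 * A$3$4 * A$4$1 * A$5$5
    + A$1$2 * A$2$3 * A$3$4 * A$4$5 * A$5$1
    + A$1$2 * A$2$3 * A$3$5 * A$4$1 * A$5$4
    - A$1$2 * A$2$3 * A$3$5 * A$4$4 * A$5$1
    - A$1$2 * A$2$4 * A$3$1 * A$4$3 * A$5$5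
    + A$1$2 * A$2$4 * A$3$1 * A$4$5 * A$5$3
    + A$1$2 * A$2$4 * A$3$3 * A$4$1 * A$5$5
    - A$1$2 * A$2$4 * A$3$3 * A$4$5 * A$5$1
    - A$1$2 * A$2$4 * A$3$5 * A$4$1 * A$5$3
    + A$1$2 * A$2$4 * A$3$5 * A$4$3 * A$5$1
    + A$1$2 * A$2$5 * A$3$1 * A$4$3 * A$5$4
    - A$1$2 * A$2$5 * A$3$1 * A$4$4 * A$5$3
    - A$1$2 * A$2$5 * A$3$3 * A$4$1 * A$5$4
    + A$1$2 * A$2$5 * A$3$3 * A$4$4 * A$5$1
    + A$1$2 * A$2$5 * A$3$4 * A$4$1 * A$5$3
    - A$1$2 * A$2$5 * A$3$4 * A$4$3 * A$5$1
    + A$1$3 * A$2$1 * A$3$2 * A$4$4 * A$5$5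
    - A$1$3 * A$2$1 * A$3$2 * A$4$5 * A$5$4
    - A$1$3 * A$2$1 * A$3$4 * A$4$2 * A$5$5
    + A$1$3 * A$2$1 * A$3$4 * A$4$5 * A$5$2
    + A$1$3 * A$2$1 * A$3$5 * A$4$2 * A$5$4
    - A$1$3 * A$2$1 * A$3$5 * A$4$4 * A$5$2
    - A$1$3 * A$2$2 * A$3$1 * A$4$4 * A$5$5
    + A$1$3 * A$2$2 * A$3$1 * A$4$5 * A$5$4
    + A$1$3 * A$2$2 * A$3$4 * A$4$1 * A$5$5
    - A$1$3 * A$2$2 * A$3$4 * A$4$5 * A$5$1
    - A$1$3 * A$2$2 * A$3$5 * A$4$1 * A$5$4
    + A$1$3 * A$2$2 * A$3$5 * A$4$4 * A$5$1
    + A$1$3 * A$2$4 * A$3$1 * A$4$2 * A$5$5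
    - A$1$3 * A$2$4 * A$3$1 * A$4$5 * A$5$2
    - A$1$3 * A$2$4 * A$3$2 * A$4$1 * A$5$5
    + A$1$3 * A$2$4 * A$3$2 * A$4$5 * A$5$1
    + A$1$3 * A$2$4 * A$3$5 * A$4$1 * A$5$2
    - A$1$3 * A$2$4 * A$3$5 * A$4$2 * A$5$1
    - A$1$3 * A$2$5 * A$3$1 * A$4$2 * A$5$4
    + A$1$3 * A$2$5 * A$3$1 * A$4$4 * A$5$2
    + A$1$3 * A$2$5 * A$3$2 * A$4$1 * A$5$4
    - A$1$3 * A$2$5 * A$3$2 * A$4$4 * A$5$1
    - A$1$3 * A$2$5 * A$3$4 * A$4$1 * A$5$2
    + A$1$3 * A$2$5 * A$3$4 * A$4$2 * A$5$1
    - A$1$4 * A$2$1 * A$3$2 * A$4$3 * A$5$5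
    + A$1$4 * A$2$1 * A$3$2 * A$4$5 * A$5$3
    + A$1$4 * A$2$1 * A$3$3 * A$4$2 * A$5$5
    - A$1$4 * A$2$1 * A$3$3 * A$4$5 * A$5$2
    - A$1$4 * A$2$1 * A$3$5 * A$4$2 * A$5$3
    + A$1$4 * A$2$1 * A$3$5 * A$4$3 * A$5$2
    + A$1$4 * A$2$2 * A$3$1 * A$4$3 * A$5$5
    - A$1$4 * A$2$2 * A$3$1 * A$4$5 * A$5$3
    - A$1$4 * A$2$2 * A$3$3 * A$4$1 * A$5$5
    + A$1$4 * A$2$2 * A$3$3 * A$4$5 * A$5$1
    + A$1$4 * A$2$2 * A$3$5 * A$4$1 * A$5$3
    - A$1$4 * A$2$2 * A$3$5 * A$4$3 * A$5$1
    - A$1$4 * A$2$3 * A$3$1 * A$4$2 * A$5$5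
    + A$1$4 * A$2$3 * A$3$1 * A$4$5 * A$5$2
    + A$1$4 * A$2$3 * A$3$2 * A$4$1 * A$5$5
    - A$1$4 * A$2$3 * A$3$2 * A$4$5 * A$5$1
    - A$1$4 * A$2$3 * A$3$5 * A$4$1 * A$5$2
    + A$1$4 * A$2$3 * A$3$5 * A$4$2 * A$5$1
    + A$1$4 * A$2$5 * A$3$1 * A$4$2 * A$5$3
    - A$1$4 * A$2$5 * A$3$1 * A$4$3 * A$5$2
    - A$1$4 * A$2$5 * A$3$2 * A$4$1 * A$5$3
    + A$1$4 * A$2$5 * A$3$2 * A$4$3 * A$5$1
    + A$1$4 * A$2$5 * A$3$3 * A$4$1 * A$5$2
    - A$1$4 * A$2$5 * A$3$3 * A$4$2 * A$5$1
    + A$1$5 * A$2$1 * A$3$2 * A$4$3 * A$5$4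
    - A$1$5 * A$2$1 * A$3$2 * A$4$4 * A$5$3
    - A$1$5 * A$2$1 * A$3$3 * A$4$2 * A$5$4
    + A$1$5 * A$2$1 * A$3$3 * A$4$4 * A$5$2
    + A$1$5 * A$2$1 * A$3$4 * A$4$2 * A$5$3
    - A$1$5 * A$2$1 * A$3$4 * A$4$3 * A$5$2
    - A$1$5 * A$2$2 * A$3$1 * A$4$3 * A$5$4
    + A$1$5 * A$2$2 * A$3$1 * A$4$4 * A$5$3
    + A$1$5 * A$2$2 * A$3$3 * A$4$1 * A$5$4
    - A$1$5 * A$2$2 * A$3$3 * A$4$4 * A$5$1
    - A$1$5 * A$2$2 * A$3$4 * A$4$1 * A$5$3
    + A$1$5 * A$2$2 * A$3$4 * A$4$3 * A$5$1
    + A$1$5 * A$2$3 * A$3$1 * A$4$2 * A$5$4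
    - A$1$5 * A$2$3 * A$3$1 * A$4$4 * A$5$2
    - A$1$5 * A$2$3 * A$3$2 * A$4$1 * A$5$4
    + A$1$5 * A$2$3 * A$3$2 * A$4$4 * A$5$1
    + A$1$5 * A$2$3 * A$3$4 * A$4$1 * A$5$2
    - A$1$5 * A$2$3 * A$3$4 * A$4$2 * A$5$1
    - A$1$5 * A$2$4 * A$3$1 * A$4$2 * A$5$3
    + A$1$5 * A$2$4 * A$3$1 * A$4$3 * A$5$2
    + A$1$5 * A$2$4 * A$3$2 * A$4$1 * A$5$3
    - A$1$5 * A$2$4 * A$3$2 * A$4$3 * A$5$1
    - A$1$5 * A$2$4 * A$3$3 * A$4$1 * A$5$2
    + A$1$5 * A$2$4 * A$3$3 * A$4$2 * A$5$1"
proof -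
  have f1: "finite {2::5, 3, 4, 5}" "1 \<notin> {2::5, 3, 4, 5}" by auto
  have f2: "finite {3::5, 4, 5}" "2 \<notin> {3::5, 4, 5}" by auto
  have f3: "finite {4::5, 5}" "3 \<notin> {4::5, 5}" by auto
  have f4: "finite {5::5}" "4 \<notin> {5::5}" by auto
  show ?thesis
    unfolding det_def UNIV_5
    unfolding sum_over_permutations_insert[OF f1]
    unfolding sum_over_permutations_insert[OF f2]
    unfolding sum_over_permutations_insert[OF f3]
    unfolding sum_over_permutations_insert[OF f4]
    unfolding permutes_sing
    by (simp add: sign_swap_id permutation_swap_id sign_compose permutation_compose permutation_id
        sign_id swap_id_eq algebra_simps)
qed

lemma det_uminus: "det (- A :: 'a::comm_ring_1^'n^'n) = (-1) ^ CARD('n) * det A"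
proof -
  have "- A = (\<chi> i. (-1) *s A $ i)"
    by (simp add: vec_eq_iff)
  then show ?thesis
    using det_rows_mul[of "\<lambda>_. -1" "\<lambda>i. A $ i"] by (simp add: prod_constant)
qed

lemma has_derivative_vector_5:
  fixes f1 f2 f3 f4 f5 :: "'a::real_normed_vector \<Rightarrow> real"
  assumes "(f1 has_derivative f1') F" "(f2 has_derivative f2') F" "(f3 has_derivative f3') F"
    "(f4 has_derivative f4') F" "(f5 has_derivative f5') F"
  shows "((\<lambda>x. vector [f1 x, f2 x, f3 x, f4 x, f5 x] :: real^5) has_derivative
           (\<lambda>h. vector [f1' h, f2' h, f3' h, f4' h, f5' h])) F"
proof -
  have vector_axis: "(vector [a1, a2, a3, a4, a5] :: real^5) =
      a1 *\<^sub>R axis 1 1 + a2 *\<^sub>R axis 2 1 + a3 *\<^sub>R axis 3 1 + a4 *\<^sub>R axis 4 1 + a5 *\<^sub>R axis 5 (1::real)"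
    for a1 a2 a3 a4 a5 :: real
    by (simp add: vec_eq_iff forall_5 axis_def)
  show ?thesis
    unfolding vector_axis by (intro derivative_intros assms)
qed

section \<open>Inverse matrices and the metric\<close>

lemma mat_matrix_mult: "mat c ** A = (\<chi> i j. c * A $ i $ j)"
  unfolding matrix_matrix_mult_def mat_def
  by (auto simp: vec_eq_iff if_distrib if_distribR sum.delta'[OF finite] cong: if_cong)

lemma matrix_inv_left:
  assumes "invertible A"
  shows "matrix_inv A ** A = mat 1"
  using someI_ex[OF assms[unfolded invertible_def]] by (simp add: matrix_inv_def)

lemma matrix_inv_unique:
  fixes A :: "'a::comm_semiring_1^'n^'n"
  assumes "A ** B = mat 1" and "B ** A = mat 1"
  shows "matrix_inv A = B"
proof -
  have "invertible A"
    using assms invertible_def by blast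
  then have "matrix_inv A = matrix_inv A ** (A ** B)"
    by (simp add: assms)
  also have "\<dots> = B"
    using \<open>invertible A\<close> by (simp add: matrix_mul_assoc matrix_inv_left)
  finally show ?thesis .
qed

lemma matrix_inv_2:
  fixes G :: "'a::field^2^2"
  assumes "det G \<noteq> 0"
  shows "matrix_inv G = vector [vector [G$2$2 / det G, - G$1$2 / det G],
                                  vector [- G$2$1 / det G, G$1$1 / det G]]"
  using assms
  by (intro matrix_inv_unique)
     (simp_all add: vec_eq_iff forall_2 matrix_matrix_mult_def sum_2 mat_def det_2
        add_divide_distrib[symmetric] diff_divide_distrib[symmetric] algebra_simps)

lemma pos_definite_imp_nonneg:
  assumes "\<forall>x. x \<noteq> 0 \<longrightarrow> x \<bullet> (G *v x) > 0"
  shows "x \<bullet> (G *v x) \<ge> (0::real)"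
  using assms by (cases "x = 0") (auto intro: less_imp_le)

lemma transpose_eq_imp_sym_2:
  assumes "transpose G = (G :: 'a^2^2)"
  shows "G$2$1 = G$1$2"
  using arg_cong[OF assms, of "\<lambda>A. A $ 1 $ 2"] by (simp add: transpose_def)

lemma det_pos_if_pos_definite_2:
  fixes G :: "real^2^2"
  assumes "transpose G = G" and pos: "\<forall>x. x \<noteq> 0 \<longrightarrow> x \<bullet> (G *v x) > 0"
  shows "det G > 0"
proof -
  have G21: "G$2$1 = G$1$2"
    using assms(1) by (rule transpose_eq_imp_sym_2)
  have "(vector [1, 0] :: real^2) \<noteq> 0"
    by (simp add: vec_eq_iff forall_2)
  then have "G$1$1 > 0"
    using pos by (fastforce simp: inner_vec_def sum_2 matrix_vector_mult_def)
  moreover have "(vector [G$1$2, - G$1$1] :: real^2) \<noteq> 0"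
    using \<open>G$1$1 > 0\<close> by (simp add: vec_eq_iff forall_2)
  then have "G$1$1 * det G > 0"
    using pos by (fastforce simp: inner_vec_def sum_2 matrix_vector_mult_def det_2 G21 algebra_simps)
  ultimately show ?thesis
    using zero_less_mult_pos by blast
qed

lemma symmetric_matrix_inv_2:
  fixes G :: "real^2^2"
  assumes "transpose G = G" and "det G \<noteq> 0"
  defines "k \<equiv> matrix_inv G"
  shows "k$2$1 = k$1$2"
    and "k$1$1 * k$2$2 - (k$1$2)^2 = 1 / det G"
    and "k$2$2 * x^2 - 2 * k$1$2 * x * y + k$1$1 * y^2 = vector [x, y] \<bullet> (G *v vector [x, y]) / det G"
    and "(G *v v)$1 * k$1$1 + (G *v v)$2 * k$1$2 = v$1"
    and "(G *v v)$1 * k$1$2 + (G *v v)$2 * k$2$2 = v$2"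
proof -
  have G21: "G$2$1 = G$1$2"
    using assms(1) by (rule transpose_eq_imp_sym_2)
  have k: "k$1$1 = G$2$2 / det G" "k$1$2 = - G$1$2 / det G" "k$2$1 = - G$1$2 / det G"
    "k$2$2 = G$1$1 / det G"
    by (simp_all add: k_def matrix_inv_2 assms(2) G21)
  have det: "det G = G$1$1 * G$2$2 - G$1$2 * G$1$2"
    by (simp add: det_2 G21)
  show "k$2$1 = k$1$2"
    by (simp add: k)
  show "k$1$1 * k$2$2 - (k$1$2)^2 = 1 / det G"
    using assms(2) by (simp add: k field_simps power2_eq_square) (simp add: det algebra_simps)
  show "k$2$2 * x^2 - 2 * k$1$2 * x * y + k$1$1 * y^2 = vector [x, y] \<bullet> (G *v vector [x, y]) / det G"
    using assms(2)
    by (simp add: k inner_vec_def sum_2 matrix_vector_mult_def G21 field_simps power2_eq_square)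
  define w where "w = G *v v"
  have "k *v w = v"
    using assms(2) invertible_det_nz[of G]
    by (simp add: k_def w_def matrix_vector_mul_assoc matrix_inv_left)
  then have "v$1 = k$1$1 * w$1 + k$1$2 * w$2" "v$2 = k$2$1 * w$1 + k$2$2 * w$2"
    by (auto simp: vec_eq_iff forall_2 matrix_vector_mult_def sum_2)
  then show "(G *v v)$1 * k$1$1 + (G *v v)$2 * k$1$2 = v$1" "(G *v v)$1 * k$1$2 + (G *v v)$2 * k$2$2 = v$2"
    unfolding w_def[symmetric] \<open>k$2$1 = k$1$2\<close> by (simp_all add: mult.commute)
qed

section \<open>Characteristic polynomials and hyperbolicity\<close>

lemma cmat_mat: "cmat (mat x) = mat (complex_of_real x)"
  by (simp add: cmat_def mat_def vec_eq_iff)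

lemma det_cmat: "det (cmat A) = complex_of_real (det A)"
  by (simp add: det_def cmat_def)

lemma charpoly_matrix_inv_mult:
  fixes A B :: "real^'n^'n"
  assumes "invertible A"
  shows "charpoly (matrix_inv A ** B) z = det (mat z ** cmat A - cmat B) / complex_of_real (det A)"
proof -
  have inv: "matrix_inv A ** A = mat 1" and "det A \<noteq> 0"
    using assms by (simp_all add: matrix_inv_left invertible_det_nz)
  have "cmat (matrix_inv A) ** (mat z ** cmat A - cmat B)
        = mat z ** cmat (matrix_inv A ** A) - cmat (matrix_inv A ** B)"
    unfolding mat_matrix_mult
    by (simp add: vec_eq_iff matrix_matrix_mult_def cmat_def sum_subtractf
        right_diff_distrib sum_distrib_left mult.left_commute)
  then have "charpoly (matrix_inv A ** B) z = det (cmat (matrix_inv A)) * det (mat z ** cmat A - cmat B)"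
    by (simp add: charpoly_def inv cmat_mat flip: det_mul)
  moreover have "det (cmat (matrix_inv A)) * complex_of_real (det A) = 1"
    using det_mul[of "matrix_inv A" A] by (simp add: inv det_cmat flip: of_real_mult)
  ultimately show ?thesis
    using \<open>det A \<noteq> 0\<close> by (simp add: field_simps)
qed

lemma charpoly_uminus: "charpoly (- A) z = (-1) ^ CARD('n) * charpoly (A :: real^'n^'n) (- z)"
proof -
  have pencil: "mat z - cmat (- A) = - (mat (- z) - cmat A)"
    by (simp add: vec_eq_iff mat_def cmat_def)
  show ?thesis
    by (simp only: charpoly_def pencil det_uminus)
qed

lemma eigenvalues_uminus: "eigenvalues (- A) = uminus ` eigenvalues A"
proof -
  have "z \<in> eigenvalues (- A) \<longleftrightarrow> - z \<in> eigenvalues A" for z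
    by (simp add: eigenvalues_def charpoly_uminus)
  then show ?thesis
    by (force intro: image_eqI[where x = "- z" for z])
qed

lemma all_real_eigenvalues_uminus: "all_real_eigenvalues (- A) \<longleftrightarrow> all_real_eigenvalues A"
  by (simp add: all_real_eigenvalues_def eigenvalues_uminus)

lemma distinct_eigenvalues_uminus: "distinct_eigenvalues (- A) \<longleftrightarrow> distinct_eigenvalues A"
  by (simp add: distinct_eigenvalues_def eigenvalues_uminus card_image)

lemma unit_scaleR_cases:
  fixes A :: "'a::real_vector"
  assumes "\<bar>w\<bar> = (1::real)"
  obtains "w *\<^sub>R A = A" | "w *\<^sub>R A = - A"
proof -
  have "w = 1 \<or> w = -1"
    using assms by linarith
  then show ?thesis
    using that by (metis scaleR_one scaleR_minus1_left)
qed

lemma all_unit_scaleR_iff: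
  fixes A :: "'a::real_vector"
  assumes "Q (- A) \<longleftrightarrow> Q A"
  shows "(\<forall>w::real. \<bar>w\<bar> = 1 \<longrightarrow> Q (w *\<^sub>R A)) \<longleftrightarrow> Q A"
proof
  assume "\<forall>w::real. \<bar>w\<bar> = 1 \<longrightarrow> Q (w *\<^sub>R A)"
  then show "Q A"
    by (metis abs_1 scaleR_one)
next
  assume "Q A"
  show "\<forall>w::real. \<bar>w\<bar> = 1 \<longrightarrow> Q (w *\<^sub>R A)"
  proof (intro allI impI)
    fix w :: real
    assume "\<bar>w\<bar> = 1"
    then show "Q (w *\<^sub>R A)"
      by (cases rule: unit_scaleR_cases[where A = A]) (simp_all add: \<open>Q A\<close> assms)
  qed
qed

lemma strictly_hyperbolic_iff:
  "strictly_hyperbolic A \<longleftrightarrow> all_real_eigenvalues A \<and> distinct_eigenvalues A"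
  unfolding strictly_hyperbolic_def
  by (rule all_unit_scaleR_iff) (simp add: all_real_eigenvalues_uminus distinct_eigenvalues_uminus)

lemma nonstrictly_hyperbolic_iff:
  "nonstrictly_hyperbolic A \<longleftrightarrow> all_real_eigenvalues A \<and> \<not> distinct_eigenvalues A"
  unfolding nonstrictly_hyperbolic_def
  by (simp add: all_unit_scaleR_iff all_real_eigenvalues_uminus distinct_eigenvalues_uminus)

lemma elliptic_iff: "elliptic A \<longleftrightarrow> \<not> all_real_eigenvalues A"
  using all_unit_scaleR_iff[of all_real_eigenvalues A, OF all_real_eigenvalues_uminus]
  unfolding elliptic_def by blast

lemma quadratic_eq_mult_roots:
  fixes D b Y R z :: "'a::field"
  assumes "D \<noteq> 0" and "R\<^sup>2 = b\<^sup>2 - D * Y"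
  shows "(D * z\<^sup>2 - 2 * b * z + Y) / D = (z - (b - R) / D) * (z - (b + R) / D)"
proof -
  have "(z - (b - R) / D) * (z - (b + R) / D) = z\<^sup>2 - 2 * b * z / D + (b\<^sup>2 - R\<^sup>2) / D\<^sup>2"
    using assms(1) by (simp add: field_simps power2_eq_square)
  also have "(b\<^sup>2 - R\<^sup>2) / D\<^sup>2 = Y / D"
    using assms by (simp add: power2_eq_square)
  also have "z\<^sup>2 - 2 * b * z / D + Y / D = (D * z\<^sup>2 - 2 * b * z + Y) / D"
    using assms(1) by (simp add: field_simps)
  finally show ?thesis ..
qed

lemma Im_real_quadratic_root_eq_0_iff:
  fixes a b D t :: real
  assumes "a \<noteq> 0" and "D \<noteq> 0"
  shows "Im ((of_real b + of_real a * csqrt (of_real t)) / of_real D) = 0 \<longleftrightarrow> 0 \<le> t"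
proof (cases "0 \<le> t")
  case True
  then show ?thesis
    by (simp add: csqrt_of_real_nonneg)
next
  case False
  then show ?thesis
    using assms by (simp add: csqrt_of_real_nonpos)
qed

lemma hyperbolicity_by_charpoly:
  fixes M :: "real^5^5" and a b D l t :: real
  defines "lam_m \<equiv> (of_real b - of_real a * csqrt (of_real t)) / of_real D"
    and "lam_p \<equiv> (of_real b + of_real a * csqrt (of_real t)) / of_real D"
  assumes charpoly: "\<And>z. charpoly M z = (z - of_real l) ^ 3 * (z - lam_m) * (z - lam_p)"
    and a_nz: "a \<noteq> 0" and D_nz: "D \<noteq> 0"
  shows "\<not> distinct_eigenvalues M"
    and "all_real_eigenvalues M \<longleftrightarrow> 0 \<le> t"
proof -
  have eigenvalues: "eigenvalues M = {of_real l, lam_m, lam_p}"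
    by (auto simp: eigenvalues_def charpoly)
  then show "\<not> distinct_eigenvalues M"
    by (auto simp: distinct_eigenvalues_def card_insert_if)
  have "lam_m = (of_real b + of_real (- a) * csqrt (of_real t)) / of_real D"
    by (simp add: lam_m_def)
  then show "all_real_eigenvalues M \<longleftrightarrow> 0 \<le> t"
    using Im_real_quadratic_root_eq_0_iff[of a D b t] Im_real_quadratic_root_eq_0_iff[of "- a" D b t]
      a_nz D_nz by (auto simp: all_real_eigenvalues_def eigenvalues lam_p_def)
qed

section \<open>Jacobians of the conical Euler flux\<close>

text \<open>The Jacobian of n1 F^1 + n2 F^2 with respect to U, where vn = v.n, (k1, k2) = g^-1 n,
  w = G v is the gradient of E in v, sg = sqrt g, and p_rho, p_e are the partial derivatives
  of P at the state.\<close>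

definition euler_flux_jacobian ::
  "'a::comm_ring_1 \<Rightarrow> 'a \<Rightarrow> 'a \<Rightarrow> 'a \<Rightarrow> 'a \<Rightarrow> 'a \<Rightarrow> 'a \<Rightarrow> 'a \<Rightarrow> 'a \<Rightarrow>
   'a \<Rightarrow> 'a \<Rightarrow> 'a \<Rightarrow> 'a \<Rightarrow> 'a \<Rightarrow> 'a \<Rightarrow> 'a \<Rightarrow> 'a^5^5" where
  "euler_flux_jacobian rho v1 v2 V3 E p p_rho p_e sg k1 k2 w1 w2 vn n1 n2 = vector [
     vector [sg * vn, sg * (rho * n1), sg * (rho * n2), 0, 0],
     vector [sg * (v1 * vn + k1 * p_rho), sg * (rho * vn + rho * v1 * n1), sg * (rho * v1 * n2),
             0, sg * (k1 * p_e)],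
     vector [sg * (v2 * vn + k2 * p_rho), sg * (rho * v2 * n1), sg * (rho * vn + rho * v2 * n2),
             0, sg * (k2 * p_e)],
     vector [sg * (V3 * vn), sg * (rho * V3 * n1), sg * (rho * V3 * n2), sg * (rho * vn), 0],
     vector [sg * ((E + p_rho) * vn), sg * (rho * w1 * vn + (rho * E + p) * n1),
             sg * (rho * w2 * vn + (rho * E + p) * n2), sg * (rho * V3 * vn), sg * ((rho + p_e) * vn)]]"

lemma det_euler_flux_jacobian:
  fixes rho v1 v2 V3 E p p_rho p_e sg k1 k2 w1 w2 vn n1 n2 :: "'a::comm_ring_1"
  assumes lowered: "w1 * k1 + w2 * k2 = vn"
  shows "det (euler_flux_jacobian rho v1 v2 V3 E p p_rho p_e sg k1 k2 w1 w2 vn n1 n2) =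
     sg^5 * rho^2 * vn^3 * (rho^2 * vn^2 - (p * p_e + rho^2 * p_rho) * (n1 * k1 + n2 * k2))"
proof -
  define L :: "'a^5^5" where "L = vector [
     vector [1, 0, 0, 0, 0], vector [v1, 1, 0, 0, 0], vector [v2, 0, 1, 0, 0],
     vector [V3, 0, 0, 1, 0], vector [E, w1, w2, V3, 1]]"
  define M :: "'a^5^5" where "M = vector [
     vector [sg * vn, sg * (rho * n1), sg * (rho * n2), 0, 0],
     vector [sg * (k1 * p_rho), sg * (rho * vn), 0, 0, sg * (k1 * p_e)],
     vector [sg * (k2 * p_rho), 0, sg * (rho * vn), 0, sg * (k2 * p_e)],
     vector [0, 0, 0, sg * (rho * vn), 0],
     vector [0, sg * (p * n1), sg * (p * n2), 0, sg * (rho * vn)]]"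
  have "euler_flux_jacobian rho v1 v2 V3 E p p_rho p_e sg k1 k2 w1 w2 vn n1 n2 = L ** M"
    unfolding vec_eq_iff forall_5 matrix_matrix_mult_def euler_flux_jacobian_def L_def M_def
    by (simp add: sum_5 algebra_simps flip: lowered)
  moreover have "det L = 1"
    unfolding det_5 L_def by simp
  moreover have "det M =
      sg^5 * rho^2 * vn^3 * (rho^2 * vn^2 - (p * p_e + rho^2 * p_rho) * (n1 * k1 + n2 * k2))"
    unfolding det_5 M_def by (simp add: eval_nat_numeral algebra_simps)
  ultimately show ?thesis
    by (simp add: det_mul)
qed

lemma euler_flux_jacobian_pencil:
  fixes rho v1 v2 V3 E p p_rho p_e sg k1 k2 k1' k2' w1 w2 vn vn' :: real
  shows "mat z ** cmat (euler_flux_jacobian rho v1 v2 V3 E p p_rho p_e sg k1 k2 w1 w2 vn 1 0)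
           - cmat (euler_flux_jacobian rho v1 v2 V3 E p p_rho p_e sg k1' k2' w1 w2 vn' 0 1)
         = euler_flux_jacobian (of_real rho) (of_real v1) (of_real v2) (of_real V3) (of_real E)
             (of_real p) (of_real p_rho) (of_real p_e) (of_real sg)
             (z * of_real k1 - of_real k1') (z * of_real k2 - of_real k2') (of_real w1) (of_real w2)
             (z * of_real vn - of_real vn') z (-1)"
  unfolding mat_matrix_mult vec_eq_iff forall_5
  by (simp add: cmat_def euler_flux_jacobian_def algebra_simps)

lemma charpoly_euler_flux_jacobians:
  fixes rho v1 v2 V3 E p p_rho p_e sg k11 k12 k22 w1 w2 :: real and z :: complex
  defines "A1 \<equiv> euler_flux_jacobian rho v1 v2 V3 E p p_rho p_e sg k11 k12 w1 w2 v1 1 0"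
    and "A2 \<equiv> euler_flux_jacobian rho v1 v2 V3 E p p_rho p_e sg k12 k22 w1 w2 v2 0 1"
    and "K \<equiv> p * p_e + rho^2 * p_rho"
  assumes lowered1: "w1 * k11 + w2 * k12 = v1" and lowered2: "w1 * k12 + w2 * k22 = v2"
    and "invertible A1"
  shows "v1 \<noteq> 0" and "rho^2 * v1^2 - K * k11 \<noteq> 0"
    and "charpoly (matrix_inv A1 ** A2) z =
      (z * v1 - v2)^3 * (rho^2 * (z * v1 - v2)^2 - K * (k11 * z^2 - 2 * k12 * z + k22))
      / (v1^3 * (rho^2 * v1^2 - K * k11))"
proof -
  have "det A1 = sg^5 * rho^2 * v1^3 * (rho^2 * v1^2 - K * k11)"
    unfolding A1_def K_def using lowered1 by (simp add: det_euler_flux_jacobian)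
  moreover have "det A1 \<noteq> 0"
    using \<open>invertible A1\<close> invertible_det_nz by blast
  ultimately have "sg \<noteq> 0" "rho \<noteq> 0" "v1 \<noteq> 0" "rho^2 * v1^2 - K * k11 \<noteq> 0"
    by auto
  then show "v1 \<noteq> 0" "rho^2 * v1^2 - K * k11 \<noteq> 0"
    by auto
  have lowered_pencil: "w1 * (z * k11 - k12) + w2 * (z * k12 - k22) = z * v1 - v2"
    by (simp add: algebra_simps flip: lowered1 lowered2 of_real_mult)
  have "charpoly (matrix_inv A1 ** A2) z = det (mat z ** cmat A1 - cmat A2) / det A1"
    using \<open>invertible A1\<close> by (rule charpoly_matrix_inv_mult)
  also have "det (mat z ** cmat A1 - cmat A2) =
      sg^5 * rho^2 * (z * v1 - v2)^3 * (rho^2 * (z * v1 - v2)^2 - K * (k11 * z^2 - 2 * k12 * z + k22))"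
    unfolding A1_def A2_def euler_flux_jacobian_pencil det_euler_flux_jacobian[OF lowered_pencil]
    by (simp add: K_def power2_eq_square algebra_simps)
  finally show "charpoly (matrix_inv A1 ** A2) z =
      (z * v1 - v2)^3 * (rho^2 * (z * v1 - v2)^2 - K * (k11 * z^2 - 2 * k12 * z + k22))
      / (v1^3 * (rho^2 * v1^2 - K * k11))"
    using \<open>sg \<noteq> 0\<close> \<open>rho \<noteq> 0\<close> by (simp add: \<open>det A1 = _\<close>)
qed

lemma bounded_linear_crossvel: "bounded_linear crossvel"
proof -
  have "linear crossvel"
    by (simp add: linear_iff crossvel_def vec_eq_iff forall_2)
  then show ?thesis
    by (simp add: linear_conv_bounded_linear)
qed

lemma crossvel_nth: "crossvel U $ i = (if i = 1 then 1 else 0) * U$2 + (if i = 2 then 1 else 0) * U$3"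
  using exhaust_2[of i] by (auto simp: crossvel_def)

lemma has_derivative_total_energy:
  assumes "transpose G = G"
  shows "(total_energy G has_derivative
           (\<lambda>h. (G *v crossvel U) $ 1 * h$2 + (G *v crossvel U) $ 2 * h$3 + U$4 * h$4 + h$5)) (at U)"
proof -
  show ?thesis
    unfolding total_energy_def[abs_def]
    apply (rule has_derivative_eq_rhs)
     apply (rule derivative_eq_intros bounded_linear_imp_has_derivative[OF bounded_linear_vec_nth]
        bounded_linear_imp_has_derivative[OF bounded_linear_crossvel]
        bounded_linear.has_derivative[OF matrix_vector_mul_bounded_linear] refl)+
    by (simp add: transpose_eq_imp_sym_2[OF assms] fun_eq_iff crossvel_def matrix_vector_mult_def
        inner_vec_def sum_2 algebra_simps)
qed

lemma fluxjac_eq: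
  fixes G :: "real^2^2" and a :: 2
  assumes "transpose G = G"
    and P_deriv: "((\<lambda>x. P (fst x) (snd x)) has_derivative
                    (\<lambda>h. Pr (U$1) (U$5) * fst h + Pe (U$1) (U$5) * snd h)) (at (U$1, U$5))"
  shows "fluxjac G P a U =
    euler_flux_jacobian (U$1) (U$2) (U$3) (U$4) (total_energy G U)
      (P (U$1) (U$5)) (Pr (U$1) (U$5)) (Pe (U$1) (U$5)) (sqrt (det G))
      (matrix_inv G $ 1 $ a) (matrix_inv G $ 2 $ a) ((G *v crossvel U) $ 1) ((G *v crossvel U) $ 2)
      (crossvel U $ a) (if a = 1 then 1 else 0) (if a = 2 then 1 else 0)"
    (is "_ = ?J")
proof -
  have pressure: "((\<lambda>U. P (U$1) (U$5)) has_derivative (\<lambda>h. Pr (U$1) (U$5) * h$1 + Pe (U$1) (U$5) * h$5))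
      (at U)"
  proof -
    have "((\<lambda>x. P (fst x) (snd x)) \<circ> (\<lambda>U. (U$1, U$5)) has_derivative
        (\<lambda>h. Pr (U$1) (U$5) * fst h + Pe (U$1) (U$5) * snd h) \<circ> (\<lambda>h. (h$1, h$5))) (at U)"
      by (intro diff_chain_at P_deriv bounded_linear_imp_has_derivative bounded_linear_Pair
          bounded_linear_vec_nth)
    then show ?thesis
      by (simp add: o_def)
  qed
  have "(flux G P a has_derivative (\<lambda>h. ?J *v h)) (at U)"
    unfolding flux_def[abs_def] Let_def
    apply (rule has_derivative_eq_rhs)
     apply (rule has_derivative_vector_5;
        (rule derivative_eq_intros pressure has_derivative_total_energy[OF assms(1)]
          bounded_linear_imp_has_derivative[OF bounded_linear_vec_nth]
          bounded_linear.has_derivative[OF bounded_linear_vec_nth]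
          bounded_linear_imp_has_derivative[OF bounded_linear_crossvel] refl)+)
    by (simp add: fun_eq_iff vec_eq_iff forall_5 matrix_vector_mult_def sum_5 euler_flux_jacobian_def
        crossvel_nth algebra_simps)
  then show ?thesis
    unfolding fluxjac_def jacobian_def
    by (metis frechet_derivative_at matrix_of_matrix_vector_mul)
qed

lemma conical_charpoly_factorization:
  fixes rho v1 v2 c g qc k11 k12 k22 :: real and z :: complex
  defines "D \<equiv> v1^2 - k11 * c^2"
    and "lam_m \<equiv> (of_real (v1 * v2 - c^2 * k12) - of_real (c / sqrt g) * csqrt (of_real (qc^2 - c^2)))
                  / of_real (v1^2 - k11 * c^2)"
    and "lam_p \<equiv> (of_real (v1 * v2 - c^2 * k12) + of_real (c / sqrt g) * csqrt (of_real (qc^2 - c^2)))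
                  / of_real (v1^2 - k11 * c^2)"
  assumes "rho \<noteq> 0" and "v1 \<noteq> 0" and "D \<noteq> 0" and "g > 0"
    and det_inverse: "k11 * k22 - k12^2 = 1 / g"
    and adjugate_form: "k22 * v1^2 - 2 * k12 * v1 * v2 + k11 * v2^2 = qc^2 / g"
  shows "(z * v1 - v2)^3 * (rho^2 * (z * v1 - v2)^2 - rho^2 * c^2 * (k11 * z^2 - 2 * k12 * z + k22))
           / (v1^3 * (rho^2 * v1^2 - rho^2 * c^2 * k11))
         = (z - of_real (v2 / v1))^3 * (z - lam_m) * (z - lam_p)"
proof -
  define b Y where "b = v1 * v2 - c^2 * k12" and "Y = v2^2 - c^2 * k22"
  define R where "R = of_real (c / sqrt g) * csqrt (of_real (qc^2 - c^2))"
  have "R^2 = of_real ((c / sqrt g)^2) * of_real (qc^2 - c^2)"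
    by (simp only: R_def power_mult_distrib power2_csqrt of_real_power)
  also have "(c / sqrt g)^2 = c^2 / g"
    using \<open>g > 0\<close> by (simp add: power_divide)
  finally have R2: "R^2 = of_real (c^2 / g * (qc^2 - c^2))"
    by simp
  have "b^2 - D * Y = c^2 * (k22 * v1^2 - 2 * k12 * v1 * v2 + k11 * v2^2) - c^4 * (k11 * k22 - k12^2)"
    unfolding b_def Y_def D_def by algebra
  also have "\<dots> = c^2 / g * (qc^2 - c^2)"
    unfolding adjugate_form det_inverse
    using \<open>g > 0\<close> by (simp add: field_simps power2_eq_square power4_eq_xxxx)
  finally have "R^2 = of_real (b^2 - D * Y)"
    by (simp only: R2)
  then have "R^2 = (of_real b)^2 - of_real D * of_real Y"
    by simp
  moreover have "lam_m = (of_real b - R) / of_real D" and "lam_p = (of_real b + R) / of_real D"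
    by (simp_all add: lam_m_def lam_p_def b_def R_def D_def)
  ultimately have roots: "(of_real D * z^2 - 2 * of_real b * z + of_real Y) / of_real D
      = (z - lam_m) * (z - lam_p)"
    using quadratic_eq_mult_roots[of "of_real D"] \<open>D \<noteq> 0\<close> by simp
  have quad: "rho^2 * (z * v1 - v2)^2 - rho^2 * c^2 * (k11 * z^2 - 2 * k12 * z + k22)
      = rho^2 * (D * z^2 - 2 * b * z + Y)"
    by (simp add: D_def b_def Y_def power2_eq_square algebra_simps)
  have den: "(v1^3 * (rho^2 * v1^2 - rho^2 * c^2 * k11) :: complex) = rho^2 * (v1^3 * D)"
    by (simp add: D_def algebra_simps)
  have "(z * v1 - v2)^3 * (rho^2 * (z * v1 - v2)^2 - rho^2 * c^2 * (k11 * z^2 - 2 * k12 * z + k22))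
           / (v1^3 * (rho^2 * v1^2 - rho^2 * c^2 * k11))
      = (z * v1 - v2)^3 / v1^3 * ((D * z^2 - 2 * b * z + Y) / D)"
    unfolding quad den using \<open>rho \<noteq> 0\<close> by simp
  also have "(z * v1 - v2)^3 / v1^3 = (z - of_real (v2 / v1))^3"
    using \<open>v1 \<noteq> 0\<close> by (simp add: field_simps flip: power_divide)
  finally show ?thesis
    by (simp add: roots)
qed

lemma conical_euler_charpoly:
  fixes G :: "real^2^2" and P Pr Pe :: "real \<Rightarrow> real \<Rightarrow> real" and U :: "real^5" and z :: complex
  assumes G_sym: "transpose G = G"
    and G_pos: "\<forall>x::real^2. x \<noteq> 0 \<longrightarrow> x \<bullet> (G *v x) > 0"
    and P_deriv: "((\<lambda>x. P (fst x) (snd x)) has_derivative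
                    (\<lambda>h. Pr (U$1) (U$5) * fst h + Pe (U$1) (U$5) * snd h)) (at (U$1, U$5))"
    and rho_pos: "U$1 > 0"
    and sound: "P (U$1) (U$5) * Pe (U$1) (U$5) + (U$1)^2 * Pr (U$1) (U$5) > 0"
    and inv: "invertible (fluxjac G P 1 U)"
  defines "c \<equiv> sqrt (P (U$1) (U$5) * Pe (U$1) (U$5) + (U$1)^2 * Pr (U$1) (U$5)) / U$1"
    and "qc \<equiv> sqrt (crossvel U \<bullet> (G *v crossvel U))"
    and "gi \<equiv> matrix_inv G"
  shows "(U$2)^2 - gi$1$1 * c^2 \<noteq> 0"
    and "charpoly (matrix_inv (fluxjac G P 1 U) ** fluxjac G P 2 U) z =
      (z - of_real (U$3 / U$2))^3
      * (z - (of_real (U$2 * U$3 - c^2 * gi$1$2) - of_real (c / sqrt (det G)) * csqrt (of_real (qc^2 - c^2)))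
             / of_real ((U$2)^2 - gi$1$1 * c^2))
      * (z - (of_real (U$2 * U$3 - c^2 * gi$1$2) + of_real (c / sqrt (det G)) * csqrt (of_real (qc^2 - c^2)))
             / of_real ((U$2)^2 - gi$1$1 * c^2))"
    (is "?charpoly = ?rhs")
proof -
  define K where "K = P (U$1) (U$5) * Pe (U$1) (U$5) + (U$1)^2 * Pr (U$1) (U$5)"
  define w where "w = G *v crossvel U"
  have "det G > 0"
    using G_sym G_pos by (rule det_pos_if_pos_definite_2)
  then have "det G \<noteq> 0"
    by simp
  note gi = symmetric_matrix_inv_2[OF G_sym this, folded gi_def]
  note fluxjac = fluxjac_eq[where P = P and Pr = Pr and Pe = Pe and U = U, OF G_sym P_deriv]
  have A1: "fluxjac G P 1 U = euler_flux_jacobian (U$1) (U$2) (U$3) (U$4) (total_energy G U)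
      (P (U$1) (U$5)) (Pr (U$1) (U$5)) (Pe (U$1) (U$5)) (sqrt (det G))
      (gi$1$1) (gi$1$2) (w$1) (w$2) (U$2) 1 0"
    using fluxjac[of 1, folded gi_def w_def] by (simp add: gi(1) crossvel_def)
  have A2: "fluxjac G P 2 U = euler_flux_jacobian (U$1) (U$2) (U$3) (U$4) (total_energy G U)
      (P (U$1) (U$5)) (Pr (U$1) (U$5)) (Pe (U$1) (U$5)) (sqrt (det G))
      (gi$1$2) (gi$2$2) (w$1) (w$2) (U$3) 0 1"
    using fluxjac[of 2, folded gi_def w_def] by (simp add: crossvel_def)
  have lowered: "w$1 * gi$1$1 + w$2 * gi$1$2 = U$2" "w$1 * gi$1$2 + w$2 * gi$2$2 = U$3"
    using gi(4,5)[of "crossvel U"] by (simp_all add: w_def crossvel_def)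
  note jacobians = charpoly_euler_flux_jacobians[OF lowered inv[unfolded A1], folded A1 A2 K_def]
  have K: "K = (U$1)^2 * c^2"
    using sound rho_pos by (simp add: K_def c_def power_divide)
  have D: "(U$1)^2 * (U$2)^2 - K * gi$1$1 = (U$1)^2 * ((U$2)^2 - gi$1$1 * c^2)"
    by (simp add: K algebra_simps)
  show "(U$2)^2 - gi$1$1 * c^2 \<noteq> 0"
    using jacobians(2) by (simp add: D)
  have "crossvel U \<bullet> (G *v crossvel U) \<ge> 0"
    using G_pos by (rule pos_definite_imp_nonneg)
  then have adjugate_form: "gi$2$2 * (U$2)^2 - 2 * gi$1$2 * U$2 * U$3 + gi$1$1 * (U$3)^2 = qc^2 / det G"
    using gi(3)[of "U$2" "U$3"] by (simp add: qc_def crossvel_def)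
  have "U$1 \<noteq> 0"
    using rho_pos by simp
  show "?charpoly = ?rhs"
    using conical_charpoly_factorization[OF \<open>U$1 \<noteq> 0\<close> jacobians(1) \<open>(U$2)^2 - gi$1$1 * c^2 \<noteq> 0\<close>
        \<open>det G > 0\<close> gi(2) adjugate_form]
    by (simp add: jacobians(3) K)
qed

theorem mainTheorem3:
  fixes G :: "real^2^2" and P Pr Pe :: "real \<Rightarrow> real \<Rightarrow> real" and U :: "real^5"
  assumes G_sym: "transpose G = G"
    and G_pos: "\<forall>x::real^2. x \<noteq> 0 \<longrightarrow> x \<bullet> (G *v x) > 0"
    and P_diff: "\<forall>r s. r > 0 \<longrightarrow>
         ((\<lambda>x. P (fst x) (snd x)) has_derivative (\<lambda>h. Pr r s * fst h + Pe r s * snd h)) (at (r, s))"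
    and rho_pos: "U$1 > 0"
    and sound: "P (U$1) (U$5) * Pe (U$1) (U$5) + (U$1)^2 * Pr (U$1) (U$5) > 0"
    and inv: "invertible (fluxjac G P 1 U)"
  shows
    "let rho = U$1; v1 = U$2; v2 = U$3; e = U$5;
         g = det G; gi = matrix_inv G;
         qc = sqrt (crossvel U \<bullet> (G *v crossvel U));
         c = sqrt (P rho e * Pe rho e + rho^2 * Pr rho e) / rho;
         Abar = matrix_inv (fluxjac G P 1 U) ** fluxjac G P 2 U;
         lam0 = complex_of_real (v2 / v1);
         lamm = (complex_of_real (v1 * v2 - c^2 * gi$1$2)
                  - complex_of_real (c / sqrt g) * csqrt (complex_of_real (qc^2 - c^2)))
                / complex_of_real (v1^2 - gi$1$1 * c^2);
         lamp = (complex_of_real (v1 * v2 - c^2 * gi$1$2)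
                  + complex_of_real (c / sqrt g) * csqrt (complex_of_real (qc^2 - c^2)))
                / complex_of_real (v1^2 - gi$1$1 * c^2)
     in (\<forall>z. charpoly Abar z = (z - lam0)^3 * (z - lamm) * (z - lamp))
        \<and> \<not> strictly_hyperbolic Abar
        \<and> (qc > c \<longrightarrow> nonstrictly_hyperbolic Abar)
        \<and> (qc < c \<longrightarrow> elliptic Abar)"
proof -
  define c where "c = sqrt (P (U$1) (U$5) * Pe (U$1) (U$5) + (U$1)^2 * Pr (U$1) (U$5)) / U$1"
  define qc where "qc = sqrt (crossvel U \<bullet> (G *v crossvel U))"
  define Abar where "Abar = matrix_inv (fluxjac G P 1 U) ** fluxjac G P 2 U"
  have P_deriv: "((\<lambda>x. P (fst x) (snd x)) has_derivative
                    (\<lambda>h. Pr (U$1) (U$5) * fst h + Pe (U$1) (U$5) * snd h)) (at (U$1, U$5))"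
    using P_diff rho_pos by blast
  note conical = conical_euler_charpoly[where P = P and Pr = Pr and Pe = Pe and U = U,
      OF G_sym G_pos P_deriv rho_pos sound inv, folded c_def qc_def Abar_def]
  have "c > 0"
    using sound rho_pos by (simp add: c_def)
  moreover have "det G > 0"
    using G_sym G_pos by (rule det_pos_if_pos_definite_2)
  ultimately have "c / sqrt (det G) \<noteq> 0"
    by simp
  note eigenvalues = hyperbolicity_by_charpoly[OF conical(2) this conical(1)]
  have "qc \<ge> 0"
    using pos_definite_imp_nonneg[OF G_pos] by (simp add: qc_def)
  then have "c < qc \<Longrightarrow> 0 \<le> qc^2 - c^2" and "qc < c \<Longrightarrow> qc^2 - c^2 < 0"
    using \<open>c > 0\<close> by (simp_all add: power_strict_mono less_imp_le)
  then show ?thesis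
    unfolding Let_def c_def[symmetric] qc_def[symmetric] Abar_def[symmetric]
    using conical(2) eigenvalues
    by (auto simp: strictly_hyperbolic_iff nonstrictly_hyperbolic_iff elliptic_iff)
qed

end
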